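(* Let $\mathcal{L}$ be a finite collection of non-vertical lines in $\mathbb{R}^3$ in general position, and let $C$ be a cycle of $\mathcal{L}$ whose projection $C^*$ is self-crossing. Then there is a cycle $C_0$ formed by a proper subset of the lines of $C$ (so with fewer lines than $C$) such that $C_0^*\subseteq C^*$ and every non-vertical edge of $\pi(C_0)$ is contained in a non-vertical edge of $\pi(C)$. Consequently, every cycle $C$ of $\mathcal{L}$ admits a simple cycle $C_0$ with this property, and any finite set of points on the lines of $\mathcal{L}$ that eliminates every simple cycle of $\mathcal{L}$ eliminates every cycle of $\mathcal{L}$.
   Context: A collection $\mathcal{L}$ of non-vertical lines in $\mathbb{R}^3$ is in general position if no two lines intersect, the $xy$-projections of no two lines are parallel, and the $xy$-projections of no three lines pass through a common point. For $\ell,\ell'\in\mathcal{L}$, write $\ell'\prec\ell$ if the unique vertical line meeting both meets $\ell$ at a higher point than $\ell'$. A $k$-cycle ($k\ge3$) is a cyclic sequence of distinct lines $\ell_1\prec\cdots\prec\ell_k\prec\ell_1$. For each $i$ (indices mod $k$), let $v_i^+\in\ell_i$ and $v_{i+1}^-\in\ell_{i+1}$ be the unique pair of points on these lines lying on a common vertical line; the path of $C$ is $\pi(C)=v_1^-v_1^+v_2^-v_2^+\cdots v_k^-v_k^+v_1^-$, with non-vertical edges $e_i=v_i^-v_i^+\subset\ell_i$. The projection $C^*$ is the $xy$-projection of $\pi(C)$, the closed polygonal path formed by the projected edges $e_i^*$. The cycle $C$ is simple if $C^*$ is non-self-crossing. A finite point set $P$ on the lines eliminates $C$ if some $e_i$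 contains a point of $P$. *)

theory Defs
  imports "HOL-Analysis.Analysis"
begin

text \<open>Points of R^3 are written ((x,y),z): first component the xy-point, second the height.\<close>
type_synonym pt3 = "(real \<times> real) \<times> real"
type_synonym line3 = "pt3 set"

definition nonvert_line :: "line3 \<Rightarrow> bool" where
  "nonvert_line L \<longleftrightarrow> (\<exists>p z0 (d::real\<times>real) s. d \<noteq> 0 \<and>
      L = range (\<lambda>t::real. (p + t *\<^sub>R d, z0 + t * s)))"

definition proj :: "pt3 set \<Rightarrow> (real \<times> real) set" where
  "proj A = fst ` A"

definition parallel2 :: "(real \<times> real) set \<Rightarrow> (real \<times> real) set \<Rightarrow> bool" where
  "parallel2 A B \<longleftrightarrow> (\<exists>d p q. d \<noteq> 0 \<and>
      A = range (\<lambda>t::real. p + t *\<^sub>R d) \<and> B = range (\<lambda>t::real. q + t *\<^sub>R d))"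

definition general_position :: "line3 set \<Rightarrow> bool" where
  "general_position LL \<longleftrightarrow>
     (\<forall>L\<in>LL. \<forall>L'\<in>LL. L \<noteq> L' \<longrightarrow> L \<inter> L' = {} \<and> \<not> parallel2 (proj L) (proj L')) \<and>
     (\<forall>L1\<in>LL. \<forall>L2\<in>LL. \<forall>L3\<in>LL. L1 \<noteq> L2 \<and> L1 \<noteq> L3 \<and> L2 \<noteq> L3 \<longrightarrow>
        proj L1 \<inter> proj L2 \<inter> proj L3 = {})"

definition below :: "line3 \<Rightarrow> line3 \<Rightarrow> bool" where
  "below L' L \<longleftrightarrow> (\<exists>q z z'. (q, z) \<in> L \<and> (q, z') \<in> L' \<and> z' < z)"

definition is_cycle :: "line3 set \<Rightarrow> line3 list \<Rightarrow> bool" where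
  "is_cycle LL C \<longleftrightarrow> length C \<ge> 3 \<and> distinct C \<and> set C \<subseteq> LL \<and>
     (\<forall>i < length C. below (C ! i) (C ! ((i + 1) mod length C)))"

definition xpt :: "line3 \<Rightarrow> line3 \<Rightarrow> real \<times> real" where
  "xpt L L' = (THE q. q \<in> proj L \<inter> proj L')"

definition vpt :: "line3 \<Rightarrow> real \<times> real \<Rightarrow> pt3" where
  "vpt L q = (THE v. v \<in> L \<and> fst v = q)"

definition prev_idx :: "line3 list \<Rightarrow> nat \<Rightarrow> nat" where
  "prev_idx C i = (i + length C - 1) mod length C"

definition next_idx :: "line3 list \<Rightarrow> nat \<Rightarrow> nat" where
  "next_idx C i = (i + 1) mod length C"

definition vminus :: "line3 list \<Rightarrow> nat \<Rightarrow> pt3" where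
  "vminus C i = vpt (C ! i) (xpt (C ! prev_idx C i) (C ! i))"

definition vplus :: "line3 list \<Rightarrow> nat \<Rightarrow> pt3" where
  "vplus C i = vpt (C ! i) (xpt (C ! i) (C ! next_idx C i))"

definition edge :: "line3 list \<Rightarrow> nat \<Rightarrow> pt3 set" where
  "edge C i = closed_segment (vminus C i) (vplus C i)"

text \<open>C^*: the xy-projection of the path of C (vertical edges project to points
  which are endpoints of projected non-vertical edges).\<close>
definition cycle_proj :: "line3 list \<Rightarrow> (real \<times> real) set" where
  "cycle_proj C = (\<Union>i < length C. proj (edge C i))"

definition self_crossing :: "line3 list \<Rightarrow> bool" where
  "self_crossing C \<longleftrightarrow> (\<exists>i < length C. \<exists>j < length C. i \<noteq> j \<and>
      j \<noteq> next_idx C i \<and> i \<noteq> next_idx C j \<and>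
      proj (edge C i) \<inter> proj (edge C j) \<noteq> {})"

definition simple_cycle :: "line3 set \<Rightarrow> line3 list \<Rightarrow> bool" where
  "simple_cycle LL C \<longleftrightarrow> is_cycle LL C \<and> \<not> self_crossing C"

definition eliminates :: "pt3 set \<Rightarrow> line3 list \<Rightarrow> bool" where
  "eliminates P C \<longleftrightarrow> (\<exists>i < length C. edge C i \<inter> P \<noteq> {})"

end

theory Submission
  imports Defs
begin

text \<open>If two non-adjacent projected edges \<open>e\<^sub>a\<^sup>*\<close> and \<open>e\<^sub>b\<^sup>*\<close> of a cycle cross at \<open>q\<close>, the
  vertical line through \<open>q\<close> meets the disjoint lines \<open>\<ell>\<^sub>a\<close> and \<open>\<ell>\<^sub>b\<close> at different heights, say
  \<open>\<ell>\<^sub>b \<prec> \<ell>\<^sub>a\<close>. Then the arc \<open>\<ell>\<^sub>a, \<dots>, \<ell>\<^sub>b\<close> of the cycle closes up into a cycle with fewer lines: its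
  edges on \<open>\<ell>\<^sub>a\<close> and \<open>\<ell>\<^sub>b\<close> are the pieces of \<open>e\<^sub>a\<close> and \<open>e\<^sub>b\<close> cut off at \<open>q\<close>, and all its other
  edges are edges of the original cycle. Repeating this until the projection no longer crosses
  itself yields a simple cycle whose edges lie inside edges of the original one, so any point
  set eliminating the simple cycle also eliminates the original cycle.\<close>

subsection \<open>Non-vertical lines\<close>

lemma nonvert_lineE:
  assumes "nonvert_line L"
  obtains p z0 d s where "d \<noteq> 0" "L = range (\<lambda>t::real. (p + t *\<^sub>R d, z0 + t * s))"
  using assms unfolding nonvert_line_def by blast

lemma line_through_two_points:
  fixes p d x y :: "'a::real_vector"
  assumes "d \<noteq> 0" and "x \<in> range (\<lambda>t. p + t *\<^sub>R d)" and "y \<in> range (\<lambda>t. p + t *\<^sub>R d)"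
    and "x \<noteq> y"
  shows "range (\<lambda>t. p + t *\<^sub>R d) = range (\<lambda>t. x + t *\<^sub>R (y - x))"
proof -
  obtain t1 t2 where x: "x = p + t1 *\<^sub>R d" and y: "y = p + t2 *\<^sub>R d"
    using assms(2,3) by auto
  have ne: "t2 - t1 \<noteq> 0" using assms(4) x y by auto
  have yx: "y - x = (t2 - t1) *\<^sub>R d" using x y by (simp add: algebra_simps)
  have fwd: "p + t *\<^sub>R d = x + ((t - t1) / (t2 - t1)) *\<^sub>R (y - x)" for t
  proof -
    have "((t - t1) / (t2 - t1)) *\<^sub>R (y - x) = (t - t1) *\<^sub>R d"
      using ne by (simp add: yx)
    then show ?thesis by (simp add: x algebra_simps)
  qed
  have bwd: "x + s *\<^sub>R (y - x) = p + (t1 + s * (t2 - t1)) *\<^sub>R d" for s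
    unfolding yx by (simp add: x algebra_simps)
  show ?thesis
  proof (intro equalityI subsetI; elim rangeE)
    show "z \<in> range (\<lambda>t. x + t *\<^sub>R (y - x))" if "z = p + t *\<^sub>R d" for z t
      unfolding that fwd by (rule rangeI)
    show "z \<in> range (\<lambda>t. p + t *\<^sub>R d)" if "z = x + t *\<^sub>R (y - x)" for z t
      unfolding that bwd by (rule rangeI)
  qed
qed

lemma proj_nonvert_line:
  assumes "nonvert_line L"
  obtains p d where "d \<noteq> 0" "proj L = range (\<lambda>t. p + t *\<^sub>R d)"
proof -
  obtain p z0 d s where "d \<noteq> 0" and L: "L = range (\<lambda>t::real. (p + t *\<^sub>R d, z0 + t * s))"
    using assms by (rule nonvert_lineE)
  moreover have "proj L = range (\<lambda>t. p + t *\<^sub>R d)"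
    unfolding L proj_def by (auto simp: image_image)
  ultimately show thesis using that by blast
qed

lemma nonparallel_proj_meet_unique:
  assumes "nonvert_line L" "nonvert_line L'" "\<not> parallel2 (proj L) (proj L')"
    and "x \<in> proj L \<inter> proj L'" "y \<in> proj L \<inter> proj L'"
  shows "x = y"
proof (rule ccontr)
  assume xy: "x \<noteq> y"
  have through_xy: "proj M = range (\<lambda>t. x + t *\<^sub>R (y - x))"
    if "nonvert_line M" "x \<in> proj M" "y \<in> proj M" for M
  proof -
    obtain p d where "d \<noteq> 0" and "proj M = range (\<lambda>t. p + t *\<^sub>R d)"
      using \<open>nonvert_line M\<close> by (rule proj_nonvert_line)
    with that xy show ?thesis using line_through_two_points by metis
  qed
  have "parallel2 (proj L) (proj L')"
    unfolding parallel2_def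
  proof (intro exI conjI)
    show "y - x \<noteq> 0" using xy by simp
    show "proj L = range (\<lambda>t. x + t *\<^sub>R (y - x))"
      using through_xy assms(1,4,5) by simp
    show "proj L' = range (\<lambda>t. x + t *\<^sub>R (y - x))"
      using through_xy assms(2,4,5) by simp
  qed
  with assms(3) show False ..
qed

lemma inj_on_fst_nonvert_line:
  assumes "nonvert_line L"
  shows "inj_on fst L"
proof
  obtain p z0 d s where d: "d \<noteq> 0" and L: "L = range (\<lambda>t::real. (p + t *\<^sub>R d, z0 + t * s))"
    using assms by (rule nonvert_lineE)
  fix v w assume "v \<in> L" "w \<in> L" and fst: "fst v = fst w"
  then obtain t1 t2 where v: "v = (p + t1 *\<^sub>R d, z0 + t1 * s)"
    and w: "w = (p + t2 *\<^sub>R d, z0 + t2 * s)"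
    using L by auto
  with fst have "t1 *\<^sub>R d = t2 *\<^sub>R d" by simp
  with d v w show "v = w" by (simp add: scaleR_cancel_right)
qed

lemma vpt_fst:
  assumes "nonvert_line L" "v \<in> L"
  shows "vpt L (fst v) = v"
  unfolding vpt_def
  using assms inj_on_fst_nonvert_line[OF assms(1)] by (auto dest: inj_onD)

lemma convex_nonvert_line:
  assumes "nonvert_line L"
  shows "convex L"
proof -
  obtain p z0 d s where L: "L = range (\<lambda>t::real. (p + t *\<^sub>R d, z0 + t * s))"
    using assms by (rule nonvert_lineE)
  have "(1 - u) *\<^sub>R (p + t1 *\<^sub>R d, z0 + t1 * s) + u *\<^sub>R (p + t2 *\<^sub>R d, z0 + t2 * s)
        = (p + ((1 - u) * t1 + u * t2) *\<^sub>R d, z0 + ((1 - u) * t1 + u * t2) * s)" for u t1 t2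
    by (simp add: algebra_simps)
  then show ?thesis
    unfolding convex_alt L by (auto simp del: scaleR_Pair)
qed

lemma vpt_in_line:
  assumes "nonvert_line L" "q \<in> proj L"
  shows "vpt L q \<in> L"
  using assms vpt_fst unfolding proj_def by auto

lemma not_below_self:
  assumes "nonvert_line L"
  shows "\<not> below L L"
proof
  assume "below L L"
  then obtain q z z' where "(q, z) \<in> L" "(q, z') \<in> L" "z' < z"
    unfolding below_def by blast
  with inj_onD[OF inj_on_fst_nonvert_line[OF assms], of "(q, z)" "(q, z')"] show False
    by simp
qed

lemma below_imp_proj_meet: "below L' L \<Longrightarrow> proj L \<inter> proj L' \<noteq> {}"
  unfolding below_def proj_def by force

subsection \<open>Cyclic indices\<close>

lemma prev_idx_eq:
  assumes "i < length C"
  shows "prev_idx C i = (if i = 0 then length C - 1 else i - 1)"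
proof (cases i)
  case (Suc j)
  then have "i + length C - 1 = j + length C" by simp
  with assms Suc show ?thesis by (simp add: prev_idx_def)
qed (use assms in \<open>simp add: prev_idx_def\<close>)

lemma next_idx_eq:
  assumes "i < length C"
  shows "next_idx C i = (if Suc i = length C then 0 else Suc i)"
  using assms by (auto simp: next_idx_def)

lemma next_prev_idx:
  assumes "i < length C"
  shows "next_idx C (prev_idx C i) = i"
  using assms by (simp add: prev_idx_eq next_idx_eq)

lemma edge_cong:
  assumes "C' ! i' = C ! i" "C' ! prev_idx C' i' = C ! prev_idx C i"
    and "C' ! next_idx C' i' = C ! next_idx C i"
  shows "edge C' i' = edge C i"
  unfolding edge_def vminus_def vplus_def using assms by simp

lemma edge_rotate:
  assumes "i < length C"
  shows "edge (rotate n C) i = edge C ((n + i) mod length C)"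
proof (rule edge_cong)
  let ?k = "length C"
  have k: "0 < ?k" using assms by linarith
  show "rotate n C ! i = C ! ((n + i) mod ?k)"
    using assms by (rule nth_rotate)
  have "i + ?k - 1 = i + (?k - 1)" "(n + i) mod ?k + ?k - 1 = (n + i) mod ?k + (?k - 1)"
    using k by linarith+
  then have "(n + (i + ?k - 1) mod ?k) mod ?k = ((n + i) mod ?k + ?k - 1) mod ?k"
    by (simp add: mod_add_left_eq mod_add_right_eq add.assoc)
  then show "rotate n C ! prev_idx (rotate n C) i = C ! prev_idx C ((n + i) mod ?k)"
    using k by (simp add: prev_idx_def nth_rotate)
  have "(n + (i + 1) mod ?k) mod ?k = ((n + i) mod ?k + 1) mod ?k"
    by (simp add: mod_add_left_eq mod_add_right_eq mod_Suc_eq add.assoc)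
  then show "rotate n C ! next_idx (rotate n C) i = C ! next_idx C ((n + i) mod ?k)"
    using k by (simp add: next_idx_def nth_rotate)
qed

subsection \<open>Cycles\<close>

lemma is_cycle_nth_in:
  assumes "is_cycle LL C" "i < length C"
  shows "C ! i \<in> LL"
  using assms unfolding is_cycle_def by auto

lemma is_cycle_below_next:
  assumes "is_cycle LL C" "i < length C"
  shows "below (C ! i) (C ! next_idx C i)"
  using assms unfolding is_cycle_def next_idx_def by blast

lemma is_cycle_below_prev:
  assumes "is_cycle LL C" "i < length C"
  shows "below (C ! prev_idx C i) (C ! i)"
proof -
  have "prev_idx C i < length C"
    using assms(2) by (auto simp: prev_idx_eq)
  from is_cycle_below_next[OF assms(1) this] show ?thesis
    by (simp add: next_prev_idx assms(2))
qed

lemma is_cycle_rotate: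
  assumes "is_cycle LL C"
  shows "is_cycle LL (rotate n C)"
  unfolding is_cycle_def
proof (intro conjI allI impI)
  let ?k = "length C"
  fix i assume "i < length (rotate n C)"
  then have i: "i < ?k" by simp
  then have k: "0 < ?k" by linarith
  let ?j = "(n + i) mod ?k"
  have "(n + (i + 1) mod ?k) mod ?k = (?j + 1) mod ?k"
    by (simp add: mod_add_left_eq mod_add_right_eq mod_Suc_eq add.assoc)
  then have "rotate n C ! ((i + 1) mod ?k) = C ! ((?j + 1) mod ?k)"
    using k by (simp add: nth_rotate)
  moreover have "rotate n C ! i = C ! ?j" using i by (rule nth_rotate)
  moreover have "?j < ?k" using k by simp
  ultimately show "below (rotate n C ! i) (rotate n C ! ((i + 1) mod length (rotate n C)))"
    using assms unfolding is_cycle_def by simp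
qed (use assms in \<open>auto simp: is_cycle_def\<close>)

lemma is_cycle_take:
  assumes "is_cycle LL C" "2 \<le> b" "b < length C" "below (C ! b) (C ! 0)"
  shows "is_cycle LL (take (Suc b) C)"
  unfolding is_cycle_def
proof (intro conjI allI impI)
  fix t assume "t < length (take (Suc b) C)"
  then have t: "t \<le> b" using assms(3) by simp
  show "below (take (Suc b) C ! t) (take (Suc b) C ! ((t + 1) mod length (take (Suc b) C)))"
  proof (cases "t = b")
    case True
    then show ?thesis using assms(3,4) by simp
  next
    case False
    with t assms(3) show ?thesis
      using is_cycle_below_next[OF assms(1), of t] by (simp add: next_idx_eq)
  qed
next
  show "3 \<le> length (take (Suc b) C)" using assms(2,3) by simp
  show "distinct (take (Suc b) C)" using assms(1) by (simp add: is_cycle_def)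
  show "set (take (Suc b) C) \<subseteq> LL"
    using assms(1) set_take_subset[of "Suc b" C] by (auto simp: is_cycle_def)
qed

lemma set_take_psubset:
  assumes "distinct xs" "n < length xs"
  shows "set (take n xs) \<subset> set xs"
proof -
  have "xs ! n \<in> set (drop n xs)"
    unfolding Cons_nth_drop_Suc[OF assms(2), symmetric] by simp
  then have "xs ! n \<notin> set (take n xs)"
    using set_take_disj_set_drop_if_distinct[OF assms(1), of n n] by blast
  moreover have "xs ! n \<in> set xs" using assms(2) by simp
  ultimately show ?thesis using set_take_subset[of n xs] by blast
qed

definition edges_within :: "line3 list \<Rightarrow> line3 list \<Rightarrow> bool" where
  "edges_within C0 C \<longleftrightarrow> (\<forall>j < length C0. \<exists>i < length C. edge C0 j \<subseteq> edge C i)"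

lemma edges_within_refl: "edges_within C C"
  unfolding edges_within_def by blast

lemma edges_within_trans: "edges_within C2 C1 \<Longrightarrow> edges_within C1 C \<Longrightarrow> edges_within C2 C"
  unfolding edges_within_def by (meson order_trans)

lemma edges_within_rotate: "edges_within (rotate n C) C"
  unfolding edges_within_def
proof (intro allI impI)
  fix j assume "j < length (rotate n C)"
  then have j: "j < length C" by simp
  then have "0 < length C" by linarith
  then have "(n + j) mod length C < length C" by simp
  with edge_rotate[OF j] show "\<exists>i < length C. edge (rotate n C) j \<subseteq> edge C i" by auto
qed

lemma cycle_proj_mono: "edges_within C0 C \<Longrightarrow> cycle_proj C0 \<subseteq> cycle_proj C"
  unfolding edges_within_def cycle_proj_def proj_def by blast

lemma eliminates_mono: "edges_within C0 C \<Longrightarrow> eliminates P C0 \<Longrightarrow> eliminates P C"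
  unfolding edges_within_def eliminates_def by blast

subsection \<open>Shortcutting self-crossing cycles\<close>

locale general_position_lines =
  fixes LL :: "line3 set"
  assumes nonvert: "L \<in> LL \<Longrightarrow> nonvert_line L"
    and general_position: "general_position LL"
begin

lemma xpt_eqI:
  assumes "L \<in> LL" "L' \<in> LL" "L \<noteq> L'" "x \<in> proj L \<inter> proj L'"
  shows "xpt L L' = x"
  unfolding xpt_def
proof (rule the_equality)
  have "\<not> parallel2 (proj L) (proj L')"
    using general_position assms(1-3) unfolding general_position_def by blast
  then show "y = x" if "y \<in> proj L \<inter> proj L'" for y
    using nonparallel_proj_meet_unique nonvert assms(1,2,4) that by blast
qed (rule assms(4))

lemma xpt_in_proj_if_below:
  assumes "below L' L" "L \<in> LL" "L' \<in> LL"
  shows "xpt L L' \<in> proj L \<inter> proj L'" "xpt L' L \<in> proj L \<inter> proj L'"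
proof -
  obtain x where x: "x \<in> proj L \<inter> proj L'" using below_imp_proj_meet[OF assms(1)] by blast
  have "L' \<noteq> L" using assms(1,2) not_below_self nonvert by blast
  with assms(2,3) x show "xpt L L' \<in> proj L \<inter> proj L'" "xpt L' L \<in> proj L \<inter> proj L'"
    using xpt_eqI by (metis Int_commute)+
qed

lemma edge_subset_line:
  assumes cyc: "is_cycle LL C" and i: "i < length C"
  shows "edge C i \<subseteq> C ! i"
proof -
  have k: "0 < length C" using i by linarith
  have prev_in: "C ! prev_idx C i \<in> LL" and next_in: "C ! next_idx C i \<in> LL"
    using is_cycle_nth_in[OF cyc] k by (simp_all add: prev_idx_def next_idx_def)
  have Ci: "C ! i \<in> LL" using is_cycle_nth_in[OF cyc i] .
  have "vminus C i \<in> C ! i"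
    unfolding vminus_def using xpt_in_proj_if_below(2)[OF is_cycle_below_prev[OF cyc i] Ci prev_in]
    by (intro vpt_in_line nonvert[OF Ci]) blast
  moreover have "vplus C i \<in> C ! i"
    unfolding vplus_def using xpt_in_proj_if_below(2)[OF is_cycle_below_next[OF cyc i] next_in Ci]
    by (intro vpt_in_line nonvert[OF Ci]) blast
  ultimately show ?thesis
    unfolding edge_def using convex_nonvert_line[OF nonvert[OF Ci]] by (rule closed_segment_subset)
qed

lemma vpt_in_edge:
  assumes "is_cycle LL C" "i < length C" "q \<in> proj (edge C i)"
  shows "vpt (C ! i) q \<in> edge C i"
proof -
  obtain w where w: "w \<in> edge C i" "q = fst w" using assms(3) unfolding proj_def by blast
  with edge_subset_line[OF assms(1,2)] have "vpt (C ! i) q = w"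
    using vpt_fst nonvert is_cycle_nth_in[OF assms(1,2)] by blast
  with w show ?thesis by simp
qed

lemma proj_edge_subset:
  assumes "is_cycle LL C" "i < length C"
  shows "proj (edge C i) \<subseteq> proj (C ! i)"
  using edge_subset_line[OF assms] unfolding proj_def by blast

lemma below_total:
  assumes "L \<in> LL" "L' \<in> LL" "L \<noteq> L'" "q \<in> proj L" "q \<in> proj L'"
  shows "below L L' \<or> below L' L"
proof -
  obtain z z' where z: "(q, z) \<in> L" and z': "(q, z') \<in> L'"
    using assms(4,5) unfolding proj_def by force
  have "L \<inter> L' = {}" using general_position assms(1-3) unfolding general_position_def by blast
  with z z' have "z \<noteq> z'" by blast
  with z z' show ?thesis unfolding below_def by (meson linorder_neqE)
qed

lemma edges_within_take_shortcut:
  assumes cyc: "is_cycle LL C" and b: "0 < b" "b < length C"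
    and q: "q \<in> proj (edge C 0)" "q \<in> proj (edge C b)"
  shows "edges_within (take (Suc b) C) C"
  unfolding edges_within_def
proof (intro allI impI)
  have k: "0 < length C" using b by linarith
  define C0 where "C0 = take (Suc b) C"
  have len: "length C0 = Suc b" using b by (simp add: C0_def)
  have nth: "C0 ! s = C ! s" if "s \<le> b" for s using that by (simp add: C0_def)
  have "C ! 0 \<noteq> C ! b"
    using cyc b nth_eq_iff_index_eq[of C 0 b] unfolding is_cycle_def by linarith
  moreover have "C ! 0 \<in> LL" "C ! b \<in> LL"
    using is_cycle_nth_in[OF cyc] b(2) k by blast+
  moreover have "q \<in> proj (C ! 0) \<inter> proj (C ! b)"
    using q proj_edge_subset[OF cyc] b(2) k by blast
  ultimately have xq: "xpt (C ! b) (C ! 0) = q" "xpt (C ! 0) (C ! b) = q"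
    using xpt_eqI by (metis Int_commute)+
  fix t assume "t < length C0"
  then consider "t = 0" | "t = b" | "0 < t" "t < b" using len by linarith
  then show "\<exists>i < length C. edge C0 t \<subseteq> edge C i"
  proof cases
    case 1
    have "prev_idx C0 0 = b" "next_idx C0 0 = 1"
      using b len by (simp_all add: prev_idx_eq next_idx_eq)
    moreover have "next_idx C 0 = 1"
      using b unfolding next_idx_def by simp
    ultimately have "edge C0 0 = closed_segment (vpt (C ! 0) q) (vplus C 0)"
      using b xq unfolding edge_def vminus_def vplus_def by (simp add: nth)
    also have "\<dots> \<subseteq> edge C 0"
      using vpt_in_edge[OF cyc k q(1)]
      by (intro closed_segment_subset) (auto simp: edge_def)
    finally show ?thesis using 1 k by blast
  next
    case 2
    have "prev_idx C0 b = b - 1" "next_idx C0 b = 0" "prev_idx C b = b - 1"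
      using b len by (simp_all add: prev_idx_eq next_idx_eq)
    then have "edge C0 b = closed_segment (vminus C b) (vpt (C ! b) q)"
      using b xq unfolding edge_def vminus_def vplus_def by (simp add: nth)
    also have "\<dots> \<subseteq> edge C b"
      using vpt_in_edge[OF cyc b(2) q(2)]
      by (intro closed_segment_subset) (auto simp: edge_def)
    finally show ?thesis using 2 b by auto
  next
    case 3
    with b len have "edge C0 t = edge C t"
      by (intro edge_cong) (simp_all add: nth prev_idx_eq next_idx_eq)
    with 3 b show ?thesis by (intro exI[of _ t]) simp
  qed
qed

lemma shortcut_cycle:
  assumes cyc: "is_cycle LL C" and a: "a < length C" and b: "b < length C"
    and nonadj: "a \<noteq> b" "b \<noteq> next_idx C a" "a \<noteq> next_idx C b"
    and q: "q \<in> proj (edge C a)" "q \<in> proj (edge C b)" and below: "below (C ! b) (C ! a)"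
  obtains C0 where "is_cycle LL C0" "set C0 \<subset> set C" "edges_within C0 C"
proof -
  let ?k = "length C"
  define d where "d = (if a \<le> b then b - a else b + ?k - a)"
  have d: "2 \<le> d" "d + 2 \<le> ?k"
    using nonadj a b by (auto simp: d_def next_idx_eq split: if_splits)
  have "(a + d) mod ?k = b" using a b by (auto simp: d_def)
  define C' where "C' = rotate a C"
  have cyc': "is_cycle LL C'" unfolding C'_def using cyc by (rule is_cycle_rotate)
  have k: "0 < ?k" and "d < ?k" using a d by linarith+
  have "C' ! 0 = C ! a" "edge C' 0 = edge C a"
    using a by (simp_all add: C'_def nth_rotate[OF k] edge_rotate[OF k])
  moreover have "C' ! d = C ! b" "edge C' d = edge C b"
    using \<open>(a + d) mod ?k = b\<close>
    by (simp_all add: C'_def nth_rotate[OF \<open>d < ?k\<close>] edge_rotate[OF \<open>d < ?k\<close>])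
  ultimately have "is_cycle LL (take (Suc d) C')" "edges_within (take (Suc d) C') C'"
    using is_cycle_take[OF cyc'] edges_within_take_shortcut[OF cyc'] d below q
    by (simp_all add: C'_def)
  moreover have "set (take (Suc d) C') \<subset> set C"
    using set_take_psubset[of C' "Suc d"] cyc d unfolding C'_def is_cycle_def by simp
  ultimately show thesis
    using that edges_within_trans edges_within_rotate unfolding C'_def by blast
qed

lemma self_crossing_subcycle:
  assumes cyc: "is_cycle LL C" and "self_crossing C"
  obtains C0 where "is_cycle LL C0" "set C0 \<subset> set C" "edges_within C0 C"
proof -
  obtain i j where ij: "i < length C" "j < length C" "i \<noteq> j" "j \<noteq> next_idx C i" "i \<noteq> next_idx C j"
    and "proj (edge C i) \<inter> proj (edge C j) \<noteq> {}"
    using assms(2) unfolding self_crossing_def by blast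
  then obtain q where q: "q \<in> proj (edge C i)" "q \<in> proj (edge C j)" by blast
  have "C ! i \<noteq> C ! j" using cyc ij nth_eq_iff_index_eq unfolding is_cycle_def by blast
  then have "below (C ! i) (C ! j) \<or> below (C ! j) (C ! i)"
    using below_total is_cycle_nth_in[OF cyc] proj_edge_subset[OF cyc] ij q by blast
  then show thesis
    using shortcut_cycle[OF cyc ij(1,2,3,4,5) q] shortcut_cycle[OF cyc ij(2,1) ij(3)[symmetric] ij(5,4) q(2,1)]
      that by blast
qed

lemma simple_subcycle:
  assumes "is_cycle LL C"
  obtains C0 where "simple_cycle LL C0" "set C0 \<subseteq> set C" "edges_within C0 C"
  using assms
proof (induction "length C" arbitrary: C thesis rule: less_induct)
  case less
  show ?case
  proof (cases "self_crossing C")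
    case False
    then show ?thesis
      using less.prems edges_within_refl unfolding simple_cycle_def by blast
  next
    case True
    then obtain C1 where C1: "is_cycle LL C1" "set C1 \<subset> set C" "edges_within C1 C"
      using self_crossing_subcycle[OF less.prems(2)] by blast
    have "length C1 < length C"
      using C1(1,2) less.prems(2) psubset_card_mono[OF _ C1(2)]
      unfolding is_cycle_def by (simp add: distinct_card)
    with less.hyps C1(1) obtain C0 where "simple_cycle LL C0" "set C0 \<subseteq> set C1" "edges_within C0 C1"
      by blast
    with C1 less.prems(1) show ?thesis using edges_within_trans by blast
  qed
qed

end

theorem mainTheorem4:
  fixes LL :: "line3 set"
  assumes "finite LL"
    and "\<forall>L\<in>LL. nonvert_line L"
    and "general_position LL"
  shows "(\<forall>C. is_cycle LL C \<and> self_crossing C \<longrightarrow>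
            (\<exists>C0. is_cycle LL C0 \<and> set C0 \<subset> set C \<and>
                  cycle_proj C0 \<subseteq> cycle_proj C \<and>
                  (\<forall>j < length C0. \<exists>i < length C. edge C0 j \<subseteq> edge C i)))
       \<and> (\<forall>C. is_cycle LL C \<longrightarrow>
            (\<exists>C0. simple_cycle LL C0 \<and> set C0 \<subseteq> set C \<and>
                  cycle_proj C0 \<subseteq> cycle_proj C \<and>
                  (\<forall>j < length C0. \<exists>i < length C. edge C0 j \<subseteq> edge C i)))
       \<and> (\<forall>P. finite P \<and> P \<subseteq> \<Union>LL \<and> (\<forall>C. simple_cycle LL C \<longrightarrow> eliminates P C) \<longrightarrow>
            (\<forall>C. is_cycle LL C \<longrightarrow> eliminates P C))"
proof -
  interpret general_position_lines LL
    using assms(2,3) by unfold_locales auto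
  have shorter: "\<exists>C0. is_cycle LL C0 \<and> set C0 \<subset> set C \<and> cycle_proj C0 \<subseteq> cycle_proj C \<and>
      edges_within C0 C" if "is_cycle LL C" "self_crossing C" for C
    using self_crossing_subcycle[OF that] cycle_proj_mono by metis
  have simple: "\<exists>C0. simple_cycle LL C0 \<and> set C0 \<subseteq> set C \<and> cycle_proj C0 \<subseteq> cycle_proj C \<and>
      edges_within C0 C" if "is_cycle LL C" for C
    using simple_subcycle[OF that] cycle_proj_mono by metis
  have eliminated: "eliminates P C"
    if "\<forall>C. simple_cycle LL C \<longrightarrow> eliminates P C" "is_cycle LL C" for P C
    using simple_subcycle[OF that(2)] that(1) eliminates_mono by metis
  from shorter simple eliminated show ?thesis
    unfolding edges_within_def by blast
qed

end
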